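(* Let $\nu$ be a fixed order, let $a<b$, and let $f,g\in C^{\infty}[a,b]$ with $g(x)\neq 0$ and $g'(x)\neq 0$ for all $x\in[a,b]$. For $\omega>0$ set $\mathcal{H}_{\nu}[f]=\int_a^b f(x)J_{\nu}(\omega g(x))\,dx$. Define $\sigma_0[f](x)=f(x)$ and, for $k\ge 1$, $$\sigma_k[f](x)=g(x)^{\nu+k}\frac{d}{dx}\left[\frac{\sigma_{k-1}[f](x)}{g(x)^{\nu+k}g'(x)}\right].$$ Then, as $\omega\to\infty$, $$\mathcal{H}_{\nu}[f]\sim-\sum_{k=1}^{\infty}\frac{1}{(-\omega)^k}\left\{\frac{\sigma_{k-1}[f](b)}{g'(b)}J_{\nu+k}(\omega g(b))-\frac{\sigma_{k-1}[f](a)}{g'(a)}J_{\nu+k}(\omega g(a))\right\}.$$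
   Context: $J_\nu$ denotes the Bessel function of the first kind of order $\nu$. The symbol $\sim$ denotes an asymptotic expansion as $\omega\to\infty$. *)

theory Defs
  imports "HOL-Analysis.Analysis" "HOL-Library.Landau_Symbols"
begin

text \<open>Bessel function of the first kind of real order nu, at a complex argument,
  via its power series  J_nu(z) = (z/2)^nu * sum_m (-1)^m (z/2)^(2m) / (m! Gamma(m+nu+1)),
  with the principal branch of (z/2)^nu and 1/Gamma written as rGamma (entire).\<close>
definition besselJ :: "real \<Rightarrow> complex \<Rightarrow> complex" where
  "besselJ nu z = (z / 2) powr (complex_of_real nu) *
     (\<Sum>m. (-1) ^ m * (z / 2) ^ (2 * m) * rGamma (of_nat m + complex_of_real nu + 1) / fact m)"

definition smooth_on_interval :: "real \<Rightarrow> real \<Rightarrow> (real \<Rightarrow> real) \<Rightarrow> bool" where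
  "smooth_on_interval a b f \<longleftrightarrow>
     (\<exists>D :: nat \<Rightarrow> real \<Rightarrow> real. (\<forall>x\<in>{a..b}. D 0 x = f x) \<and>
        (\<forall>n. \<forall>x\<in>{a..b}. (D n has_real_derivative D (Suc n) x) (at x within {a..b})))"

definition dI :: "real \<Rightarrow> real \<Rightarrow> (real \<Rightarrow> 'v::real_normed_vector) \<Rightarrow> real \<Rightarrow> 'v" where
  "dI a b h x = vector_derivative h (at x within {a..b})"

text \<open>The operators sigma_k[f]; powers g^(nu+k) use the principal complex branch.\<close>
fun sigma :: "real \<Rightarrow> real \<Rightarrow> real \<Rightarrow> (real \<Rightarrow> real) \<Rightarrow> (real \<Rightarrow> real) \<Rightarrow> nat \<Rightarrow> real \<Rightarrow> complex" where
  "sigma a b nu g f 0 x = complex_of_real (f x)"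
| "sigma a b nu g f (Suc k) x =
     complex_of_real (g x) powr complex_of_real (nu + real (Suc k)) *
     dI a b (\<lambda>y. sigma a b nu g f k y /
                 (complex_of_real (g y) powr complex_of_real (nu + real (Suc k)) *
                  complex_of_real (dI a b g y))) x"

definition hankelI :: "real \<Rightarrow> real \<Rightarrow> real \<Rightarrow> (real \<Rightarrow> real) \<Rightarrow> (real \<Rightarrow> real) \<Rightarrow> real \<Rightarrow> complex" where
  "hankelI a b nu g f \<omega> =
     integral {a..b} (\<lambda>x. complex_of_real (f x) * besselJ nu (complex_of_real (\<omega> * g x)))"

text \<open>k-th term of the expansion (without the overall minus sign).\<close>
definition asym_term :: "real \<Rightarrow> real \<Rightarrow> real \<Rightarrow> (real \<Rightarrow> real) \<Rightarrow> (real \<Rightarrow> real) \<Rightarrow> nat \<Rightarrow> real \<Rightarrow> complex" where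
  "asym_term a b nu g f k \<omega> =
     1 / complex_of_real ((- \<omega>) ^ k) *
     (sigma a b nu g f (k - 1) b / complex_of_real (dI a b g b) *
        besselJ (nu + real k) (complex_of_real (\<omega> * g b))
      - sigma a b nu g f (k - 1) a / complex_of_real (dI a b g a) *
        besselJ (nu + real k) (complex_of_real (\<omega> * g a)))"

end

theory Submission
  imports Defs
begin

text \<open>
  The identity d/dy (y^(mu+1) J_(mu+1)(y)) = y^(mu+1) J_mu(y) turns one integration by parts into
  H_mu[h] = (B_(mu+1)[h] - H_(mu+1)[sigma h]) / omega, where B collects the boundary values.
  Iterating N + 1 times expresses the error of the N-term expansion as omega^(-N-1) times
  such a boundary term plus such an integral. Both are O(omega^(-1/2)), because
  |J_mu(y)| = O(|y|^(-1/2)) and g is bounded away from zero on [a, b]; the decay of J_mu follows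
  from an energy estimate for the first-order system satisfied by J_mu and J_(mu+1).
\<close>

section \<open>The Bessel power series\<close>

definition bessel_coeff :: "real \<Rightarrow> nat \<Rightarrow> complex" where
  "bessel_coeff mu m = (-1) ^ m * rGamma (of_nat m + complex_of_real mu + 1) / fact m"

definition bessel_series :: "real \<Rightarrow> complex \<Rightarrow> complex" where
  "bessel_series mu w = (\<Sum>m. bessel_coeff mu m * w ^ m)"

lemma besselJ_eq_bessel_series:
  "besselJ nu z = (z / 2) powr complex_of_real nu * bessel_series nu ((z / 2) ^ 2)"
proof -
  have "(z / 2) ^ (2 * m) = ((z / 2) ^ 2) ^ m" for m
    by (rule power_mult)
  then show ?thesis
    unfolding besselJ_def bessel_series_def bessel_coeff_def by (simp add: mult_ac)
qed

lemma bessel_coeff_Suc: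
  "bessel_coeff mu (Suc n) * (of_nat n + complex_of_real mu + 1) = - bessel_coeff mu n / of_nat (Suc n)"
proof -
  have "(of_nat n + complex_of_real mu + 1) * rGamma (of_nat n + complex_of_real mu + 1 + 1)
      = rGamma (of_nat n + complex_of_real mu + 1)"
    by (rule rGamma_plus1)
  moreover have "of_nat (Suc n) + complex_of_real mu + 1 = of_nat n + complex_of_real mu + 1 + 1"
    by simp
  ultimately show ?thesis
    unfolding bessel_coeff_def by (simp add: field_simps)
qed

lemma summable_bessel_series: "summable (\<lambda>m. bessel_coeff mu m * w ^ m)"
proof (rule summable_ratio_test[of "1/2" "nat \<lceil>\<bar>mu\<bar> + 2 * norm w + 2\<rceil>"])
  fix n assume "nat \<lceil>\<bar>mu\<bar> + 2 * norm w + 2\<rceil> \<le> n"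
  then have n: "real n \<ge> \<bar>mu\<bar> + 2 * norm w + 2"
    by linarith
  define z where "z = of_nat n + complex_of_real mu + 1"
  have "norm z = \<bar>real n + mu + 1\<bar>"
    unfolding z_def by (metis norm_of_real of_real_1 of_real_add of_real_of_nat_eq)
  moreover have "real n + mu + 1 \<ge> 1"
    using n norm_ge_zero[of w] abs_ge_minus_self[of mu] by linarith
  ultimately have z: "norm z = real n + mu + 1" "norm z \<ge> 1"
    by simp_all
  have "bessel_coeff mu (Suc n) * z = - bessel_coeff mu n / of_nat (Suc n)"
    using bessel_coeff_Suc z_def by simp
  then have "norm (bessel_coeff mu (Suc n)) * norm z = norm (bessel_coeff mu n) / real (Suc n)"
    by (metis norm_minus_cancel norm_divide norm_mult norm_of_nat)
  moreover have "norm z \<noteq> 0"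
    using z by simp
  ultimately have c: "norm (bessel_coeff mu (Suc n)) = norm (bessel_coeff mu n) / (real (Suc n) * norm z)"
    by (simp add: field_simps del: of_nat_Suc)
  have "2 * norm w \<le> real (Suc n) * 1"
    using n by simp
  also have "\<dots> \<le> real (Suc n) * norm z"
    using z by (intro mult_left_mono) auto
  finally have "norm w / (real (Suc n) * norm z) \<le> 1/2"
    using z by (simp add: divide_le_eq)
  then have "norm (bessel_coeff mu n) * norm w ^ n * (norm w / (real (Suc n) * norm z))
      \<le> norm (bessel_coeff mu n) * norm w ^ n * (1/2)"
    by (intro mult_left_mono) auto
  then show "norm (bessel_coeff mu (Suc n) * w ^ Suc n) \<le> 1/2 * norm (bessel_coeff mu n * w ^ n)"
    by (simp add: c norm_mult norm_power field_simps)
qed simp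

lemma diffs_bessel_coeff: "diffs (bessel_coeff mu) = (\<lambda>m. - bessel_coeff (mu + 1) m)"
proof
  fix m
  have "of_nat (Suc m) + complex_of_real mu + 1 = of_nat m + complex_of_real (mu + 1) + 1"
    by simp
  moreover have "(fact (Suc m) :: complex) = of_nat (Suc m) * fact m"
    by (rule fact_Suc)
  moreover have "(of_nat (Suc m) :: complex) \<noteq> 0"
    by (metis of_nat_eq_0_iff nat.distinct(1))
  ultimately show "diffs (bessel_coeff mu) m = - bessel_coeff (mu + 1) m"
    unfolding diffs_def bessel_coeff_def by (simp del: of_nat_Suc fact_Suc)
qed

lemma bessel_series_has_field_derivative:
  "(bessel_series mu has_field_derivative - bessel_series (mu + 1) w) (at w)"
proof -
  have "(bessel_series mu has_field_derivative (\<Sum>n. diffs (bessel_coeff mu) n * w ^ n)) (at w)"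
    unfolding bessel_series_def
    by (rule termdiffs_strong_converges_everywhere[OF summable_bessel_series])
  moreover have "(\<Sum>n. diffs (bessel_coeff mu) n * w ^ n) = - bessel_series (mu + 1) w"
    unfolding diffs_bessel_coeff bessel_series_def
    using suminf_minus[OF summable_bessel_series[of "mu + 1" w]] by simp
  ultimately show ?thesis
    by simp
qed

lemma bessel_coeff_recurrence:
  "bessel_coeff (mu - 1) m + (if m = 0 then 0 else bessel_coeff (mu + 1) (m - 1))
     = complex_of_real mu * bessel_coeff mu m"
proof -
  have r: "(of_nat m + complex_of_real mu) * rGamma (of_nat m + complex_of_real mu + 1)
      = rGamma (of_nat m + complex_of_real mu)"
    using rGamma_plus1[of "of_nat m + complex_of_real mu"] by simp
  have a: "bessel_coeff (mu - 1) m = (-1) ^ m * rGamma (of_nat m + complex_of_real mu) / fact m"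
    unfolding bessel_coeff_def by simp
  show ?thesis
  proof (cases m)
    case 0
    then show ?thesis
      using r unfolding a bessel_coeff_def by simp
  next
    case (Suc k)
    have b: "bessel_coeff (mu + 1) k = (-1) ^ k * rGamma (of_nat m + complex_of_real mu + 1) / fact k"
      unfolding bessel_coeff_def Suc by (simp add: add_ac)
    have f: "(fact m :: complex) = of_nat m * fact k"
      using Suc by (simp del: of_nat_Suc)
    have nz: "(of_nat m :: complex) \<noteq> 0" "(fact k :: complex) \<noteq> 0"
      using Suc by (metis of_nat_eq_0_iff nat.distinct(1)) simp
    have sgn: "(-1 :: complex) ^ m = - ((-1) ^ k)"
      using Suc by simp
    have "bessel_coeff (mu - 1) m + bessel_coeff (mu + 1) k
        = (-1) ^ m * (rGamma (of_nat m + complex_of_real mu)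
            - of_nat m * rGamma (of_nat m + complex_of_real mu + 1)) / fact m"
      unfolding a b f sgn using nz by (simp add: field_simps)
    also have "\<dots> = complex_of_real mu * bessel_coeff mu m"
      unfolding bessel_coeff_def r[symmetric] by (simp add: field_simps)
    finally show ?thesis
      using Suc by simp
  qed
qed

lemma bessel_series_recurrence:
  "bessel_series (mu - 1) w + w * bessel_series (mu + 1) w = complex_of_real mu * bessel_series mu w"
proof -
  have "(\<lambda>m. bessel_coeff (mu - 1) m * w ^ m) sums bessel_series (mu - 1) w"
    unfolding bessel_series_def using summable_bessel_series by (rule summable_sums)
  moreover have "(\<lambda>m. w * (bessel_coeff (mu + 1) m * w ^ m)) sums (w * bessel_series (mu + 1) w)"
    unfolding bessel_series_def using summable_bessel_series summable_sums sums_mult by blast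
  then have "(\<lambda>m. if m = 0 then 0 else w * (bessel_coeff (mu + 1) (m - 1) * w ^ (m - 1)))
      sums (w * bessel_series (mu + 1) w)"
    using sums_Suc_iff[where f="\<lambda>m. if m = 0 then 0 else w * (bessel_coeff (mu + 1) (m - 1) * w ^ (m - 1))"]
    by simp
  ultimately have "(\<lambda>m. bessel_coeff (mu - 1) m * w ^ m
        + (if m = 0 then 0 else w * (bessel_coeff (mu + 1) (m - 1) * w ^ (m - 1))))
      sums (bessel_series (mu - 1) w + w * bessel_series (mu + 1) w)"
    by (rule sums_add)
  moreover have "bessel_coeff (mu - 1) m * w ^ m
        + (if m = 0 then 0 else w * (bessel_coeff (mu + 1) (m - 1) * w ^ (m - 1)))
      = complex_of_real mu * (bessel_coeff mu m * w ^ m)" for m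
  proof -
    have "bessel_coeff (mu - 1) m * w ^ m
          + (if m = 0 then 0 else w * (bessel_coeff (mu + 1) (m - 1) * w ^ (m - 1)))
        = (bessel_coeff (mu - 1) m + (if m = 0 then 0 else bessel_coeff (mu + 1) (m - 1))) * w ^ m"
      by (cases m) (simp_all add: algebra_simps)
    then show ?thesis
      by (simp add: bessel_coeff_recurrence)
  qed
  moreover have "(\<lambda>m. complex_of_real mu * (bessel_coeff mu m * w ^ m)) sums (complex_of_real mu * bessel_series mu w)"
    unfolding bessel_series_def using summable_bessel_series summable_sums sums_mult by blast
  ultimately show ?thesis
    using sums_unique2 by simp
qed

section \<open>Bessel functions of a real argument\<close>

lemma has_vector_derivative_of_real_powr:
  assumes "y \<noteq> 0"
  shows "((\<lambda>t. complex_of_real t powr s) has_vector_derivative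
           (s * complex_of_real y powr s / complex_of_real y)) (at y)"
proof (cases "y > 0")
  case True
  then have "complex_of_real y \<notin> \<real>\<^sub>\<le>\<^sub>0"
    by (auto simp: nonpos_Reals_def)
  then have "((\<lambda>z. z powr s) has_field_derivative (s * complex_of_real y powr (s - 1))) (at (complex_of_real y))"
    by (rule has_field_derivative_powr)
  then have "((\<lambda>t. complex_of_real t powr s) has_vector_derivative (s * complex_of_real y powr (s - 1))) (at y)"
    by (rule has_vector_derivative_real_field)
  then show ?thesis
    by (simp add: powr_diff)
next
  case False
  with assms have y: "y < 0"
    by simp
  \<comment> \<open>Near a negative point, the principal power agrees with G, which is holomorphic there.\<close>
  define G where "G z = exp (s * (Ln (- z) + \<i> * pi))" for z
  have "- complex_of_real y \<notin> \<real>\<^sub>\<le>\<^sub>0"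
    using y by (auto simp: nonpos_Reals_def)
  then have "(G has_field_derivative G (complex_of_real y) * (s / complex_of_real y)) (at (complex_of_real y))"
    unfolding G_def by (auto intro!: derivative_eq_intros simp: field_simps)
  then have d: "((\<lambda>t. G (complex_of_real t)) has_vector_derivative G (complex_of_real y) * (s / complex_of_real y)) (at y)"
    by (rule has_vector_derivative_real_field)
  have G: "G (complex_of_real t) = complex_of_real t powr s" if "t < 0" for t
  proof -
    have "Ln (complex_of_real t) = complex_of_real (ln \<bar>t\<bar>) + pi * \<i>"
      using Ln_of_real'[of t] that by simp
    moreover have "Ln (- complex_of_real t) = complex_of_real (ln \<bar>t\<bar>)"
      using Ln_of_real[of "- t"] that by simp
    ultimately show ?thesis
      unfolding G_def powr_def using that by (simp add: mult_ac)
  qed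
  have "((\<lambda>t. complex_of_real t powr s) has_vector_derivative G (complex_of_real y) * (s / complex_of_real y)) (at y)"
    by (rule has_vector_derivative_transform_within_open[OF d, of "{..<0}"]) (use y G in auto)
  then show ?thesis
    using G[OF y] by (simp add: ac_simps)
qed

abbreviation besselJr :: "real \<Rightarrow> real \<Rightarrow> complex" where
  "besselJr mu y \<equiv> besselJ mu (complex_of_real y)"

lemma besselJr_eq_bessel_series:
  "besselJr mu y = complex_of_real (y / 2) powr complex_of_real mu * bessel_series mu ((complex_of_real (y / 2)) ^ 2)"
  unfolding besselJ_eq_bessel_series by simp

lemma norm_besselJr_minus: "norm (besselJr mu (- y)) = norm (besselJr mu y)"
proof -
  have "norm (complex_of_real (- y / 2) powr complex_of_real mu) = norm (complex_of_real (y / 2) powr complex_of_real mu)"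
    by (simp add: norm_powr_real_powr')
  then show ?thesis
    unfolding besselJr_eq_bessel_series by (simp add: norm_mult power2_eq_square)
qed

lemma besselJr_has_vector_derivative:
  assumes y: "y \<noteq> 0"
  shows "(besselJr mu has_vector_derivative
           (complex_of_real mu / complex_of_real y * besselJr mu y - besselJr (mu + 1) y)) (at y)"
proof -
  define u where "u = complex_of_real (y / 2)"
  have u: "u \<noteq> 0"
    unfolding u_def using y by simp
  have "((\<lambda>t::real. t / 2) has_vector_derivative 1 / 2) (at y)"
    by (auto intro!: derivative_eq_intros simp flip: has_real_derivative_iff_has_vector_derivative)
  from vector_diff_chain_at[OF this has_vector_derivative_of_real_powr[of "y / 2" "complex_of_real mu"]]
  have d1: "((\<lambda>t. complex_of_real (t / 2) powr complex_of_real mu) has_vector_derivative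
      (1 / 2) *\<^sub>R (complex_of_real mu * u powr complex_of_real mu / u)) (at y)"
    using y unfolding u_def by (simp add: o_def)
  have "((\<lambda>z. bessel_series mu ((z / 2) ^ 2)) has_field_derivative
      - bessel_series (mu + 1) ((complex_of_real y / 2) ^ 2) * (of_nat 2 * (complex_of_real y / 2) ^ 1 * (1 / 2)))
      (at (complex_of_real y))"
    by (rule DERIV_chain2[OF bessel_series_has_field_derivative] derivative_eq_intros refl | simp)+
  then have d2: "((\<lambda>t. bessel_series mu ((complex_of_real (t / 2)) ^ 2)) has_vector_derivative
      - bessel_series (mu + 1) (u ^ 2) * u) (at y)"
    using has_vector_derivative_real_field[where f="\<lambda>z. bessel_series mu ((z / 2) ^ 2)"]
    unfolding u_def by simp
  have "u powr complex_of_real (mu + 1) = u powr complex_of_real mu * u"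
    using u by (simp add: powr_add)
  moreover have "complex_of_real y = 2 * u"
    unfolding u_def by simp
  ultimately show ?thesis
    using has_vector_derivative_mult[OF d1 d2] u
    unfolding besselJr_eq_bessel_series u_def[symmetric]
    by (simp add: field_simps scaleR_conv_of_real)
qed

lemma continuous_on_besselJr: "continuous_on (- {0}) (besselJr mu)"
proof (rule continuous_at_imp_continuous_on, rule ballI)
  fix y :: real
  assume "y \<in> - {0}"
  then have "y \<noteq> 0"
    by simp
  from has_vector_derivative_continuous[OF besselJr_has_vector_derivative[OF this, of mu]]
  show "isCont (besselJr mu) y"
    by simp
qed

lemma besselJr_recurrence:
  assumes y: "y \<noteq> 0"
  shows "besselJr (mu - 1) y + besselJr (mu + 1) y = 2 * complex_of_real mu / complex_of_real y * besselJr mu y"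
proof -
  define u where "u = complex_of_real (y / 2)"
  have u: "u \<noteq> 0" "complex_of_real y = 2 * u"
    unfolding u_def using y by simp_all
  have "u powr complex_of_real (mu + 1) = u powr complex_of_real mu * u"
    "u powr complex_of_real (mu - 1) = u powr complex_of_real mu / u"
    using u by (simp_all add: powr_add powr_diff)
  then have "besselJr (mu - 1) y + besselJr (mu + 1) y
      = u powr complex_of_real mu / u * (bessel_series (mu - 1) (u ^ 2) + u ^ 2 * bessel_series (mu + 1) (u ^ 2))"
    unfolding besselJr_eq_bessel_series u_def[symmetric] using u by (simp add: field_simps power2_eq_square)
  also have "\<dots> = 2 * complex_of_real mu / complex_of_real y * besselJr mu y"
    unfolding bessel_series_recurrence besselJr_eq_bessel_series u_def[symmetric] using u by (simp add: field_simps)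
  finally show ?thesis .
qed

lemma besselJr_plus1_has_vector_derivative:
  assumes y: "y \<noteq> 0"
  shows "(besselJr (mu + 1) has_vector_derivative
           (besselJr mu y - complex_of_real (mu + 1) / complex_of_real y * besselJr (mu + 1) y)) (at y)"
proof -
  define c where "c = complex_of_real (mu + 1) / complex_of_real y"
  have "besselJr (mu + 1 + 1) y = 2 * c * besselJr (mu + 1) y - besselJr mu y"
    using besselJr_recurrence[OF y, of "mu + 1"] unfolding c_def by (simp add: eq_diff_eq add.commute)
  then have "(besselJr (mu + 1) has_vector_derivative
      c * besselJr (mu + 1) y - (2 * c * besselJr (mu + 1) y - besselJr mu y)) (at y)"
    using besselJr_has_vector_derivative[OF y, of "mu + 1"] unfolding c_def by simp
  moreover have "c * besselJr (mu + 1) y - (2 * c * besselJr (mu + 1) y - besselJr mu y)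
      = besselJr mu y - c * besselJr (mu + 1) y"
    by (simp add: algebra_simps)
  ultimately show ?thesis
    unfolding c_def[symmetric] by (simp only:)
qed

lemma has_vector_derivative_powr_besselJr:
  assumes y: "y \<noteq> 0"
  shows "((\<lambda>t. complex_of_real t powr complex_of_real (mu + 1) * besselJr (mu + 1) t) has_vector_derivative
           complex_of_real y powr complex_of_real (mu + 1) * besselJr mu y) (at y)"
proof -
  define s where "s = complex_of_real (mu + 1)"
  have "((\<lambda>t. complex_of_real t powr s * besselJr (mu + 1) t) has_vector_derivative
      complex_of_real y powr s * (besselJr mu y - s / complex_of_real y * besselJr (mu + 1) y)
      + s * complex_of_real y powr s / complex_of_real y * besselJr (mu + 1) y) (at y)"
    unfolding s_def
    by (rule has_vector_derivative_mult[OF has_vector_derivative_of_real_powr[OF y]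
          besselJr_plus1_has_vector_derivative[OF y]])
  moreover have "complex_of_real y powr s * (besselJr mu y - s / complex_of_real y * besselJr (mu + 1) y)
      + s * complex_of_real y powr s / complex_of_real y * besselJr (mu + 1) y
      = complex_of_real y powr s * besselJr mu y"
    by (simp add: algebra_simps)
  ultimately show ?thesis
    unfolding s_def by simp
qed

lemma has_real_derivative_Re_Im:
  assumes "(f has_vector_derivative f') F"
  shows "((\<lambda>x. Re (f x)) has_real_derivative Re f') F"
    and "((\<lambda>x. Im (f x)) has_real_derivative Im f') F"
  using bounded_linear.has_vector_derivative[OF bounded_linear_Re assms]
    bounded_linear.has_vector_derivative[OF bounded_linear_Im assms]
  by (simp_all add: has_real_derivative_iff_has_vector_derivative)

lemma mult_le_abs_mult_sum_squares:
  fixes c u v :: real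
  shows "2 * c * (u * v) \<le> \<bar>c\<bar> * (u\<^sup>2 + v\<^sup>2)"
proof -
  have "2 * c * (u * v) \<le> \<bar>c\<bar> * (2 * \<bar>u\<bar> * \<bar>v\<bar>)"
    by (simp add: abs_mult) (metis abs_ge_self abs_mult mult.assoc)
  also have "\<dots> \<le> \<bar>c\<bar> * (u\<^sup>2 + v\<^sup>2)"
    using sum_squares_bound[of "\<bar>u\<bar>" "\<bar>v\<bar>"] by (intro mult_left_mono) auto
  finally show ?thesis .
qed

text \<open>
  With r = q - (mu + 1/2) p / x and c = mu^2 - 1/4, the energy E = x (p^2 + r^2) has
  derivative -2 c p r / x, which is at most |c| E / x^2; hence E exp (|c| / x) is nonincreasing.
\<close>
lemma bessel_system_energy_bound:
  fixes p q :: "real \<Rightarrow> real"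
  assumes dp: "\<And>x. x > 0 \<Longrightarrow> (p has_real_derivative (mu / x * p x - q x)) (at x)"
    and dq: "\<And>x. x > 0 \<Longrightarrow> (q has_real_derivative (p x - (mu + 1) / x * q x)) (at x)"
  obtains K where "\<And>x. x \<ge> 1 \<Longrightarrow> x * (p x)\<^sup>2 \<le> K"
proof -
  define c where "c = mu\<^sup>2 - 1/4"
  define r where "r x = q x - (mu + 1/2) * p x / x" for x
  define E where "E x = x * ((p x)\<^sup>2 + (r x)\<^sup>2)" for x
  define F where "F x = E x * exp (\<bar>c\<bar> / x)" for x
  have dE: "(E has_real_derivative (- 2 * c * p x * r x / x)) (at x)" if x: "x > 0" for x
    unfolding E_def r_def
    apply (rule derivative_eq_intros dp[OF x] dq[OF x] refl | use x in linarith)+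
    unfolding c_def using x by (simp add: field_simps power2_eq_square)
  have dF: "(F has_real_derivative
      exp (\<bar>c\<bar> / x) * (- 2 * c * p x * r x / x - \<bar>c\<bar> * E x / x\<^sup>2)) (at x)" if x: "x > 0" for x
    unfolding F_def
    by (rule derivative_eq_intros dE[OF x] refl | use x in linarith)+
      (simp add: field_simps power2_eq_square)
  have dF_nonpos: "- 2 * c * p x * r x / x - \<bar>c\<bar> * E x / x\<^sup>2 \<le> 0" if x: "x > 0" for x
  proof -
    have "- 2 * c * (p x * r x) / x \<le> \<bar>c\<bar> * ((p x)\<^sup>2 + (r x)\<^sup>2) / x"
      using x mult_le_abs_mult_sum_squares[of "- c"] by (intro divide_right_mono) auto
    moreover have "\<bar>c\<bar> * E x / x\<^sup>2 = \<bar>c\<bar> * ((p x)\<^sup>2 + (r x)\<^sup>2) / x"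
      unfolding E_def using x by (simp add: power2_eq_square)
    ultimately show ?thesis
      by (simp add: mult.assoc)
  qed
  have "\<exists>y. (F has_real_derivative y) (at x) \<and> y \<le> 0" if "x > 0" for x
    using dF[OF that] dF_nonpos[OF that] mult_nonneg_nonpos[OF exp_ge_zero] by blast
  then have "F x \<le> F 1" if "x \<ge> 1" for x
    using that by (intro DERIV_nonpos_imp_nonincreasing[of 1 x F]) auto
  moreover have "x * (p x)\<^sup>2 \<le> F x" if "x \<ge> 1" for x
  proof -
    have "x * (p x)\<^sup>2 \<le> E x * 1"
      unfolding E_def using that by (simp add: algebra_simps)
    also have "\<dots> \<le> F x"
      unfolding F_def E_def using that by (intro mult_left_mono) auto
    finally show ?thesis .
  qed
  ultimately show ?thesis
    using that[of "F 1"] by force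
qed

lemma besselJr_decay:
  obtains C where "C \<ge> 0" "\<And>y. 1 \<le> \<bar>y\<bar> \<Longrightarrow> norm (besselJr mu y) \<le> C / sqrt \<bar>y\<bar>"
proof -
  have dJ: "(besselJr mu has_vector_derivative
      complex_of_real (mu / x) * besselJr mu x - besselJr (mu + 1) x) (at x)"
    and dJ1: "(besselJr (mu + 1) has_vector_derivative
      besselJr mu x - complex_of_real ((mu + 1) / x) * besselJr (mu + 1) x) (at x)" if "x > 0" for x
    using besselJr_has_vector_derivative[of x mu] besselJr_plus1_has_vector_derivative[of x mu] that
    by simp_all
  obtain K1 where K1: "\<And>x. x \<ge> 1 \<Longrightarrow> x * (Re (besselJr mu x))\<^sup>2 \<le> K1"
    using bessel_system_energy_bound[of "\<lambda>t. Re (besselJr mu t)" mu "\<lambda>t. Re (besselJr (mu + 1) t)"]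
      has_real_derivative_Re_Im(1)[OF dJ] has_real_derivative_Re_Im(1)[OF dJ1] by auto
  obtain K2 where K2: "\<And>x. x \<ge> 1 \<Longrightarrow> x * (Im (besselJr mu x))\<^sup>2 \<le> K2"
    using bessel_system_energy_bound[of "\<lambda>t. Im (besselJr mu t)" mu "\<lambda>t. Im (besselJr (mu + 1) t)"]
      has_real_derivative_Re_Im(2)[OF dJ] has_real_derivative_Re_Im(2)[OF dJ1] by auto
  define C where "C = sqrt (\<bar>K1\<bar> + \<bar>K2\<bar>)"
  have pos: "norm (besselJr mu x) \<le> C / sqrt x" if x: "x \<ge> 1" for x
  proof -
    have "x * (norm (besselJr mu x))\<^sup>2 = x * (Re (besselJr mu x))\<^sup>2 + x * (Im (besselJr mu x))\<^sup>2"
      by (simp add: cmod_power2 algebra_simps)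
    also have "\<dots> \<le> \<bar>K1\<bar> + \<bar>K2\<bar>"
      using K1[OF x] K2[OF x] by linarith
    finally have "sqrt (x * (norm (besselJr mu x))\<^sup>2) \<le> C"
      unfolding C_def by (rule real_sqrt_le_mono)
    then show ?thesis
      using x by (simp add: real_sqrt_mult field_simps)
  qed
  show ?thesis
  proof
    show "C \<ge> 0"
      unfolding C_def by simp
    show "norm (besselJr mu y) \<le> C / sqrt \<bar>y\<bar>" if "1 \<le> \<bar>y\<bar>" for y
      using pos[of "\<bar>y\<bar>"] norm_besselJr_minus[of mu y] that by (cases "y \<ge> 0") auto
  qed
qed

section \<open>Smooth complex-valued functions on a compact interval\<close>

fun Ck_on :: "nat \<Rightarrow> real \<Rightarrow> real \<Rightarrow> (real \<Rightarrow> complex) \<Rightarrow> bool" where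
  "Ck_on 0 a b h = True"
| "Ck_on (Suc n) a b h =
     (\<exists>h'. (\<forall>x\<in>{a..b}. (h has_vector_derivative h' x) (at x within {a..b})) \<and> Ck_on n a b h')"

definition smooth_on :: "real \<Rightarrow> real \<Rightarrow> (real \<Rightarrow> complex) \<Rightarrow> bool" where
  "smooth_on a b h \<longleftrightarrow> (\<forall>n. Ck_on n a b h)"

lemma Ck_on_SucD: "Ck_on (Suc n) a b h \<Longrightarrow> Ck_on n a b h"
proof (induction n arbitrary: h)
  case (Suc n)
  then show ?case
    by (metis Ck_on.simps(2))
qed simp

lemma Ck_on_cong: "Ck_on n a b h \<Longrightarrow> (\<And>x. x \<in> {a..b} \<Longrightarrow> h x = k x) \<Longrightarrow> Ck_on n a b k"
proof (induction n arbitrary: h k)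
  case (Suc n)
  then obtain h' where "\<forall>x\<in>{a..b}. (h has_vector_derivative h' x) (at x within {a..b})" "Ck_on n a b h'"
    by auto
  moreover from this(1) Suc.prems(2)
  have "\<forall>x\<in>{a..b}. (k has_vector_derivative h' x) (at x within {a..b})"
    by (metis has_vector_derivative_transform)
  ultimately show ?case
    by auto
qed simp

lemma Ck_on_const: "Ck_on n a b (\<lambda>x. c)"
  by (induction n arbitrary: c) (auto intro!: exI[of _ "\<lambda>x. 0"])

lemma Ck_on_add: "Ck_on n a b f \<Longrightarrow> Ck_on n a b g \<Longrightarrow> Ck_on n a b (\<lambda>x. f x + g x)"
proof (induction n arbitrary: f g)
  case (Suc n)
  then obtain f' g' where
    "\<forall>x\<in>{a..b}. (f has_vector_derivative f' x) (at x within {a..b})" "Ck_on n a b f'"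
    "\<forall>x\<in>{a..b}. (g has_vector_derivative g' x) (at x within {a..b})" "Ck_on n a b g'"
    by auto
  with Suc.IH show ?case
    by (auto intro!: exI[of _ "\<lambda>x. f' x + g' x"] has_vector_derivative_add)
qed simp

lemma Ck_on_minus: "Ck_on n a b f \<Longrightarrow> Ck_on n a b (\<lambda>x. - f x)"
proof (induction n arbitrary: f)
  case (Suc n)
  then obtain f' where
    "\<forall>x\<in>{a..b}. (f has_vector_derivative f' x) (at x within {a..b})" "Ck_on n a b f'"
    by auto
  with Suc.IH show ?case
    by (auto intro!: exI[of _ "\<lambda>x. - f' x"] has_vector_derivative_minus)
qed simp

lemma Ck_on_mult: "Ck_on n a b f \<Longrightarrow> Ck_on n a b g \<Longrightarrow> Ck_on n a b (\<lambda>x. f x * g x)"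
proof (induction n arbitrary: f g)
  case (Suc n)
  then obtain f' g' where f':
    "\<forall>x\<in>{a..b}. (f has_vector_derivative f' x) (at x within {a..b})" "Ck_on n a b f'"
    and g': "\<forall>x\<in>{a..b}. (g has_vector_derivative g' x) (at x within {a..b})" "Ck_on n a b g'"
    by auto
  have "Ck_on n a b f" "Ck_on n a b g"
    using Suc.prems Ck_on_SucD by blast+
  then have "Ck_on n a b (\<lambda>x. f x * g' x + f' x * g x)"
    using f'(2) g'(2) by (intro Ck_on_add Suc.IH)
  with f' g' show ?case
    by (auto intro!: exI[of _ "\<lambda>x. f x * g' x + f' x * g x"] has_vector_derivative_mult)
qed simp

lemma Ck_on_inverse:
  assumes "\<And>x. x \<in> {a..b} \<Longrightarrow> h x \<noteq> 0"
  shows "Ck_on n a b h \<Longrightarrow> Ck_on n a b (\<lambda>x. inverse (h x))"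
proof (induction n)
  case (Suc n)
  then obtain h' where h':
    "\<forall>x\<in>{a..b}. (h has_vector_derivative h' x) (at x within {a..b})" "Ck_on n a b h'"
    by auto
  have "Ck_on n a b h"
    using Suc.prems Ck_on_SucD by blast
  then have "Ck_on n a b (\<lambda>x. - (h' x * (inverse (h x) * inverse (h x))))"
    using h'(2) Suc.IH by (intro Ck_on_minus Ck_on_mult)
  moreover have "((\<lambda>x. inverse (h x)) has_vector_derivative - (h' x * (inverse (h x) * inverse (h x))))
      (at x within {a..b})" if x: "x \<in> {a..b}" for x
  proof -
    have "(inverse has_field_derivative - (inverse (h x) * inverse (h x))) (at (h x) within h ` {a..b})"
      using DERIV_inverse[of "h x"] assms[OF x] by (simp add: has_field_derivative_at_within power2_eq_square)
    from field_vector_diff_chain_within[OF h'(1)[rule_format, OF x] this]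
    show ?thesis
      by (simp add: o_def)
  qed
  ultimately show ?case
    by (auto intro!: exI[of _ "\<lambda>x. - (h' x * (inverse (h x) * inverse (h x)))"])
qed simp

lemma smooth_on_mult: "smooth_on a b f \<Longrightarrow> smooth_on a b g \<Longrightarrow> smooth_on a b (\<lambda>x. f x * g x)"
  unfolding smooth_on_def using Ck_on_mult by blast

lemma smooth_on_inverse:
  "smooth_on a b f \<Longrightarrow> (\<And>x. x \<in> {a..b} \<Longrightarrow> f x \<noteq> 0) \<Longrightarrow> smooth_on a b (\<lambda>x. inverse (f x))"
  unfolding smooth_on_def using Ck_on_inverse by blast

lemma smooth_on_has_vector_derivative:
  assumes "a < b" and "smooth_on a b h" and "x \<in> {a..b}"
  shows "(h has_vector_derivative dI a b h x) (at x within {a..b})"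
proof -
  obtain h' where "\<forall>x\<in>{a..b}. (h has_vector_derivative h' x) (at x within {a..b})"
    using assms(2) Ck_on.simps(2) unfolding smooth_on_def by blast
  then show ?thesis
    unfolding dI_def using vector_derivative_within_closed_interval assms(1,3) by metis
qed

lemma smooth_on_dI:
  assumes "a < b" and h: "smooth_on a b h"
  shows "smooth_on a b (dI a b h)"
  unfolding smooth_on_def
proof
  fix n
  obtain h' where h': "\<forall>x\<in>{a..b}. (h has_vector_derivative h' x) (at x within {a..b})" "Ck_on n a b h'"
    using h Ck_on.simps(2) unfolding smooth_on_def by blast
  have "h' x = dI a b h x" if "x \<in> {a..b}" for x
    unfolding dI_def using vector_derivative_within_closed_interval[OF assms(1) that] h'(1) that
    by (metis (no_types))
  with h'(2) show "Ck_on n a b (dI a b h)"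
    by (rule Ck_on_cong)
qed

lemma smooth_on_imp_continuous_on: "a < b \<Longrightarrow> smooth_on a b h \<Longrightarrow> continuous_on {a..b} h"
  unfolding continuous_on_eq_continuous_within
  using smooth_on_has_vector_derivative has_vector_derivative_continuous by blast

lemma smooth_on_interval_derivatives:
  assumes "a < b" and "smooth_on_interval a b f"
  obtains D where "\<forall>x\<in>{a..b}. D 0 x = f x" "\<forall>x\<in>{a..b}. D 1 x = dI a b f x"
    "\<forall>n. \<forall>x\<in>{a..b}. (D n has_real_derivative D (Suc n) x) (at x within {a..b})"
proof -
  obtain D where D: "\<forall>x\<in>{a..b}. D 0 x = f x"
    "\<forall>n. \<forall>x\<in>{a..b}. (D n has_real_derivative D (Suc n) x) (at x within {a..b})"
    using assms(2) unfolding smooth_on_interval_def by blast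
  have "(f has_vector_derivative D 1 x) (at x within {a..b})" if "x \<in> {a..b}" for x
    using D that has_vector_derivative_transform[of x "{a..b}" f "D 0"]
    by (auto simp: has_real_derivative_iff_has_vector_derivative)
  then have "\<forall>x\<in>{a..b}. D 1 x = dI a b f x"
    unfolding dI_def using vector_derivative_within_closed_interval[OF assms(1)] by metis
  with D that show ?thesis
    by blast
qed

lemma smooth_on_interval_has_real_derivative:
  assumes "a < b" and "smooth_on_interval a b f" and x: "x \<in> {a..b}"
  shows "(f has_real_derivative dI a b f x) (at x within {a..b})"
proof -
  obtain D where D: "\<forall>x\<in>{a..b}. D 0 x = f x" "\<forall>x\<in>{a..b}. D 1 x = dI a b f x"
    "\<forall>n. \<forall>x\<in>{a..b}. (D n has_real_derivative D (Suc n) x) (at x within {a..b})"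
    using smooth_on_interval_derivatives[OF assms(1,2)] by blast
  have "(D 0 has_real_derivative D (Suc 0) x) (at x within {a..b})"
    using D(3) x by blast
  then have "(D 0 has_real_derivative dI a b f x) (at x within {a..b})"
    using D(2) x by simp
  then show ?thesis
    using D(1) x has_vector_derivative_transform[of x "{a..b}" f "D 0"]
    by (simp add: has_real_derivative_iff_has_vector_derivative)
qed

lemma smooth_on_interval_dI:
  assumes "a < b" and "smooth_on_interval a b f"
  shows "smooth_on_interval a b (dI a b f)"
proof -
  obtain D where D: "\<forall>x\<in>{a..b}. D 1 x = dI a b f x"
    "\<forall>n. \<forall>x\<in>{a..b}. (D n has_real_derivative D (Suc n) x) (at x within {a..b})"
    by (rule smooth_on_interval_derivatives[OF assms]) blast
  show ?thesis
    unfolding smooth_on_interval_def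
  proof (rule exI[of _ "\<lambda>n. D (Suc n)"], intro conjI)
    show "\<forall>x\<in>{a..b}. D (Suc 0) x = dI a b f x"
      using D(1) by simp
    show "\<forall>n. \<forall>x\<in>{a..b}. (D (Suc n) has_real_derivative D (Suc (Suc n)) x) (at x within {a..b})"
      using D(2) by blast
  qed
qed

lemma smooth_on_of_real:
  assumes "smooth_on_interval a b f"
  shows "smooth_on a b (\<lambda>x. complex_of_real (f x))"
proof -
  obtain D where D: "\<forall>x\<in>{a..b}. D 0 x = f x"
    "\<forall>n. \<forall>x\<in>{a..b}. (D n has_real_derivative D (Suc n) x) (at x within {a..b})"
    using assms unfolding smooth_on_interval_def by blast
  have Ck: "Ck_on n a b (\<lambda>x. complex_of_real (D m x))" for n m
  proof (induction n arbitrary: m)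
    case (Suc n)
    have "\<forall>x\<in>{a..b}. ((\<lambda>x. complex_of_real (D m x)) has_vector_derivative complex_of_real (D (Suc m) x))
        (at x within {a..b})"
      using D(2) by (simp add: has_vector_derivative_of_real)
    with Suc.IH[of "Suc m"] show ?case
      by (simp only: Ck_on.simps) (rule exI[of _ "\<lambda>x. complex_of_real (D (Suc m) x)"], simp)
  qed simp
  show ?thesis
    unfolding smooth_on_def
  proof
    fix n
    show "Ck_on n a b (\<lambda>x. complex_of_real (f x))"
      by (rule Ck_on_cong[OF Ck[of n 0]]) (use D(1) in auto)
  qed
qed

lemma smooth_on_of_real_powr:
  assumes ab: "a < b" and g: "smooth_on_interval a b g" and nz: "\<forall>x\<in>{a..b}. g x \<noteq> 0"
  shows "smooth_on a b (\<lambda>x. complex_of_real (g x) powr s)"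
  unfolding smooth_on_def
proof
  fix n
  show "Ck_on n a b (\<lambda>x. complex_of_real (g x) powr s)"
  proof (induction n)
    case (Suc n)
    define h' where "h' x = complex_of_real (dI a b g x)
        * (s * complex_of_real (g x) powr s * inverse (complex_of_real (g x)))" for x
    have "Ck_on n a b h'"
      using smooth_on_of_real[OF g] smooth_on_of_real[OF smooth_on_interval_dI[OF ab g]] nz Suc.IH
      unfolding h'_def smooth_on_def by (intro Ck_on_mult Ck_on_const Ck_on_inverse) auto
    moreover have "((\<lambda>x. complex_of_real (g x) powr s) has_vector_derivative h' x) (at x within {a..b})"
      if x: "x \<in> {a..b}" for x
    proof -
      have "(g has_vector_derivative dI a b g x) (at x within {a..b})"
        using smooth_on_interval_has_real_derivative[OF ab g x]
        by (simp add: has_real_derivative_iff_has_vector_derivative)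
      moreover have "((\<lambda>t. complex_of_real t powr s) has_vector_derivative
          s * complex_of_real (g x) powr s / complex_of_real (g x)) (at (g x) within g ` {a..b})"
        using has_vector_derivative_of_real_powr[of "g x" s] nz x by (auto intro: has_vector_derivative_at_within)
      ultimately have "((\<lambda>t. complex_of_real t powr s) \<circ> g has_vector_derivative
          dI a b g x *\<^sub>R (s * complex_of_real (g x) powr s / complex_of_real (g x))) (at x within {a..b})"
        by (rule vector_diff_chain_within)
      then show ?thesis
        unfolding h'_def by (simp add: o_def scaleR_conv_of_real divide_inverse)
    qed
    ultimately show ?case
      unfolding Ck_on.simps by blast
  qed simp
qed

section \<open>Iterated integration by parts\<close>

definition bessel_integral :: "real \<Rightarrow> real \<Rightarrow> (real \<Rightarrow> real) \<Rightarrow> real \<Rightarrow> (real \<Rightarrow> complex) \<Rightarrow> real \<Rightarrow> complex" where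
  "bessel_integral a b g mu h w = integral {a..b} (\<lambda>x. h x * besselJr mu (w * g x))"

definition bessel_boundary :: "real \<Rightarrow> real \<Rightarrow> (real \<Rightarrow> real) \<Rightarrow> real \<Rightarrow> (real \<Rightarrow> complex) \<Rightarrow> real \<Rightarrow> complex" where
  "bessel_boundary a b g mu h w =
     h b / complex_of_real (dI a b g b) * besselJr mu (w * g b)
   - h a / complex_of_real (dI a b g a) * besselJr mu (w * g a)"

definition sigma_step :: "real \<Rightarrow> real \<Rightarrow> (real \<Rightarrow> real) \<Rightarrow> real \<Rightarrow> (real \<Rightarrow> complex) \<Rightarrow> real \<Rightarrow> complex" where
  "sigma_step a b g s h x = complex_of_real (g x) powr complex_of_real s *
     dI a b (\<lambda>y. h y / (complex_of_real (g y) powr complex_of_real s * complex_of_real (dI a b g y))) x"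

lemma sigma_Suc: "sigma a b nu g f (Suc k) = sigma_step a b g (nu + real (Suc k)) (sigma a b nu g f k)"
  by (rule ext) (simp add: sigma_step_def)

lemma integral_by_parts_within:
  fixes u v :: "real \<Rightarrow> 'a::{real_normed_field, banach}"
  assumes "a \<le> b"
    and du: "\<And>x. x \<in> {a..b} \<Longrightarrow> (u has_vector_derivative u' x) (at x within {a..b})"
    and dv: "\<And>x. x \<in> {a..b} \<Longrightarrow> (v has_vector_derivative v' x) (at x within {a..b})"
    and "continuous_on {a..b} u'"
  shows "integral {a..b} (\<lambda>x. u x * v' x) = u b * v b - u a * v a - integral {a..b} (\<lambda>x. u' x * v x)"
proof -
  have FTC: "((\<lambda>x. u x * v' x + u' x * v x) has_integral (u b * v b - u a * v a)) {a..b}"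
    using assms(1) du dv by (intro fundamental_theorem_of_calculus) (auto intro!: has_vector_derivative_mult)
  have "continuous_on {a..b} v"
    unfolding continuous_on_eq_continuous_within using dv has_vector_derivative_continuous by blast
  then have "(\<lambda>x. u' x * v x) integrable_on {a..b}"
    using assms(4) by (intro integrable_continuous_interval continuous_on_mult)
  from has_integral_diff[OF FTC integrable_integral[OF this]]
  have "((\<lambda>x. u x * v' x) has_integral (u b * v b - u a * v a - integral {a..b} (\<lambda>x. u' x * v x))) {a..b}"
    by simp
  then show ?thesis
    by (rule integral_unique)
qed

lemma powr_minus_nat_minus_half:
  fixes w :: real
  assumes "w > 0"
  shows "w powr (- real n - 1/2) = 1 / (w ^ n * sqrt w)"
proof -
  have "w powr (- real n - 1/2) = w powr (- (real n + 1/2))"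
    by (rule arg_cong[where f = "\<lambda>e. w powr e"]) simp
  also have "\<dots> = 1 / w powr (real n + 1/2)"
    by (rule powr_minus_divide)
  also have "\<dots> = 1 / (w ^ n * sqrt w)"
    using assms by (simp add: powr_add powr_realpow powr_half_sqrt)
  finally show ?thesis .
qed

locale bessel_phase =
  fixes a b :: real and g :: "real \<Rightarrow> real"
  assumes less: "a < b" and smooth_g: "smooth_on_interval a b g"
    and g_nonzero: "\<forall>x\<in>{a..b}. g x \<noteq> 0" and dg_nonzero: "\<forall>x\<in>{a..b}. dI a b g x \<noteq> 0"
begin

lemma smooth_on_amplitude:
  assumes "smooth_on a b h"
  shows "smooth_on a b (\<lambda>y. h y / (complex_of_real (g y) powr s * complex_of_real (dI a b g y)))"
  unfolding divide_inverse using g_nonzero dg_nonzero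
  by (intro smooth_on_mult smooth_on_inverse assms smooth_on_of_real_powr[OF less smooth_g]
      smooth_on_of_real[OF smooth_on_interval_dI[OF less smooth_g]]) auto

lemma smooth_on_sigma_step: "smooth_on a b h \<Longrightarrow> smooth_on a b (sigma_step a b g s h)"
  unfolding sigma_step_def
  by (intro smooth_on_mult smooth_on_of_real_powr[OF less smooth_g g_nonzero]
      smooth_on_dI[OF less] smooth_on_amplitude)

lemma smooth_on_sigma:
  assumes "smooth_on_interval a b f"
  shows "smooth_on a b (sigma a b nu g f k)"
proof (induction k)
  case 0
  have "sigma a b nu g f 0 = (\<lambda>x. complex_of_real (f x))"
    by (rule ext) simp
  then show ?case
    using smooth_on_of_real[OF assms] by simp
qed (simp add: sigma_Suc smooth_on_sigma_step)

lemma has_vector_derivative_powr_besselJr_phase: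
  assumes w: "w > 0" and x: "x \<in> {a..b}"
  shows "((\<lambda>y. complex_of_real (w * g y) powr complex_of_real (mu + 1) * besselJr (mu + 1) (w * g y))
      has_vector_derivative complex_of_real (w * dI a b g x)
        * (complex_of_real (w * g x) powr complex_of_real (mu + 1) * besselJr mu (w * g x)))
      (at x within {a..b})"
proof -
  have d: "((\<lambda>y. w * g y) has_vector_derivative w * dI a b g x) (at x within {a..b})"
    using DERIV_cmult[OF smooth_on_interval_has_real_derivative[OF less smooth_g x]]
    by (simp add: has_real_derivative_iff_has_vector_derivative)
  have "w * g x \<noteq> 0"
    using w g_nonzero x by simp
  then have "((\<lambda>t. complex_of_real t powr complex_of_real (mu + 1) * besselJr (mu + 1) t)
      has_vector_derivative complex_of_real (w * g x) powr complex_of_real (mu + 1) * besselJr mu (w * g x))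
      (at (w * g x) within (\<lambda>y. w * g y) ` {a..b})"
    by (rule has_vector_derivative_at_within[OF has_vector_derivative_powr_besselJr])
  from vector_diff_chain_within[OF d this] show ?thesis
    by (simp add: o_def scaleR_conv_of_real)
qed

lemma bessel_integral_by_parts:
  assumes h: "smooth_on a b h" and w: "w > 0"
  shows "bessel_integral a b g mu h w
    = (bessel_boundary a b g (mu + 1) h w
       - bessel_integral a b g (mu + 1) (sigma_step a b g (mu + 1) h) w) / complex_of_real w"
proof -
  define s where "s = complex_of_real (mu + 1)"
  define F where "F = (\<lambda>y. h y / (complex_of_real (g y) powr s * complex_of_real (dI a b g y)))"
  define Phi where "Phi y = complex_of_real (w * g y) powr s * besselJr (mu + 1) (w * g y)" for y
  define Phi' where "Phi' y = complex_of_real (w * dI a b g y) * (complex_of_real (w * g y) powr s * besselJr mu (w * g y))" for y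
  define W where "W = complex_of_real w powr s"
  have smooth_F: "smooth_on a b F"
    unfolding F_def by (rule smooth_on_amplitude[OF h])
  have dF: "(F has_vector_derivative dI a b F x) (at x within {a..b})" if "x \<in> {a..b}" for x
    using smooth_on_has_vector_derivative[OF less smooth_F that] .
  have dPhi: "(Phi has_vector_derivative Phi' x) (at x within {a..b})" if "x \<in> {a..b}" for x
    unfolding Phi_def Phi'_def s_def by (rule has_vector_derivative_powr_besselJr_phase[OF w that])
  have parts: "integral {a..b} (\<lambda>x. F x * Phi' x)
      = F b * Phi b - F a * Phi a - integral {a..b} (\<lambda>x. dI a b F x * Phi x)"
    using less dF dPhi smooth_on_imp_continuous_on[OF less smooth_on_dI[OF less smooth_F]]
    by (intro integral_by_parts_within) auto
  have scale: "complex_of_real (w * g y) powr s = W * complex_of_real (g y) powr s" for y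
    unfolding W_def of_real_mult using w by (intro powr_times_real_left) auto
  have nz: "complex_of_real (g y) powr s \<noteq> 0" "complex_of_real (dI a b g y) \<noteq> 0" if "y \<in> {a..b}" for y
    using g_nonzero dg_nonzero that by auto
  have "F x * Phi' x = complex_of_real w * W * (h x * besselJr mu (w * g x))" if "x \<in> {a..b}" for x
    unfolding F_def Phi'_def scale using nz[OF that] by (simp add: field_simps)
  then have I: "integral {a..b} (\<lambda>x. F x * Phi' x) = complex_of_real w * W * bessel_integral a b g mu h w"
    unfolding bessel_integral_def by (subst integral_cong) auto
  have "dI a b F x * Phi x = W * (sigma_step a b g (mu + 1) h x * besselJr (mu + 1) (w * g x))" for x
    unfolding sigma_step_def F_def Phi_def scale s_def[symmetric] by (simp add: mult_ac)
  then have I': "integral {a..b} (\<lambda>x. dI a b F x * Phi x)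
      = W * bessel_integral a b g (mu + 1) (sigma_step a b g (mu + 1) h) w"
    unfolding bessel_integral_def by simp
  have "F y * Phi y = W * (h y / complex_of_real (dI a b g y) * besselJr (mu + 1) (w * g y))"
    if "y \<in> {a..b}" for y
    unfolding F_def Phi_def scale using nz[OF that] by (simp add: field_simps)
  then have B: "F b * Phi b - F a * Phi a = W * bessel_boundary a b g (mu + 1) h w"
    unfolding bessel_boundary_def using less by (simp add: algebra_simps)
  have "complex_of_real w * W * bessel_integral a b g mu h w
      = W * (bessel_boundary a b g (mu + 1) h w - bessel_integral a b g (mu + 1) (sigma_step a b g (mu + 1) h) w)"
    using parts unfolding I I' B by (simp add: algebra_simps)
  moreover have "W \<noteq> 0" "complex_of_real w \<noteq> 0"
    unfolding W_def using w by auto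
  ultimately show ?thesis
    by (simp add: eq_divide_eq mult.assoc mult.left_commute[of W] mult.commute[of _ "complex_of_real w"])
qed

lemma continuous_on_g: "continuous_on {a..b} g"
  unfolding continuous_on_eq_continuous_within
  using smooth_on_interval_has_real_derivative[OF less smooth_g] DERIV_continuous by blast

lemma continuous_on_besselJr_phase: "w > 0 \<Longrightarrow> continuous_on {a..b} (\<lambda>x. besselJr mu (w * g x))"
  by (rule continuous_on_compose2[OF continuous_on_besselJr])
    (use g_nonzero in \<open>auto intro!: continuous_intros continuous_on_g\<close>)

lemma besselJr_phase_bound:
  obtains C w0 where "w0 > 0" "\<And>w x. w \<ge> w0 \<Longrightarrow> x \<in> {a..b} \<Longrightarrow> norm (besselJr mu (w * g x)) \<le> C / sqrt w"
proof -
  obtain xm where xm: "xm \<in> {a..b}" "\<forall>y\<in>{a..b}. \<bar>g xm\<bar> \<le> \<bar>g y\<bar>"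
    using continuous_attains_inf[OF compact_Icc _ continuous_on_rabs[OF continuous_on_g]] less by auto
  define m where "m = \<bar>g xm\<bar>"
  have m: "m > 0"
    unfolding m_def using g_nonzero xm by simp
  obtain C where C: "C \<ge> 0" "\<And>y. 1 \<le> \<bar>y\<bar> \<Longrightarrow> norm (besselJr mu y) \<le> C / sqrt \<bar>y\<bar>"
    by (rule besselJr_decay[of mu]) blast
  show ?thesis
  proof (rule that[of "1 / m" "C / sqrt m"])
    show "1 / m > 0"
      using m by simp
    fix w x
    assume w: "w \<ge> 1 / m" and x: "x \<in> {a..b}"
    have "w > 0"
      using w m by (smt (verit) divide_pos_pos)
    moreover have "1 \<le> w * m"
      using w m by (simp add: field_simps)
    moreover have "m \<le> \<bar>g x\<bar>"
      unfolding m_def using xm x by simp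
    ultimately have big: "1 \<le> w * m" "w * m \<le> \<bar>w * g x\<bar>"
      by (simp_all add: abs_mult)
    then have "norm (besselJr mu (w * g x)) \<le> C / sqrt \<bar>w * g x\<bar>"
      by (intro C(2)) simp
    also have "\<dots> \<le> C / sqrt (w * m)"
      using big C(1) by (intro divide_left_mono real_sqrt_le_mono) (auto intro!: mult_pos_pos)
    also have "\<dots> = C / sqrt m / sqrt w"
      by (simp add: real_sqrt_mult)
    finally show "norm (besselJr mu (w * g x)) \<le> C / sqrt m / sqrt w" .
  qed
qed

lemma bessel_integral_bound:
  assumes h: "smooth_on a b h"
  obtains C w0 where "\<And>w. w \<ge> w0 \<Longrightarrow> norm (bessel_integral a b g mu h w) \<le> C / sqrt w"
proof -
  obtain C w0 where w0: "w0 > 0"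
    and J: "\<And>w x. w \<ge> w0 \<Longrightarrow> x \<in> {a..b} \<Longrightarrow> norm (besselJr mu (w * g x)) \<le> C / sqrt w"
    by (rule besselJr_phase_bound[of mu]) blast
  obtain xh where xh: "xh \<in> {a..b}" "\<forall>y\<in>{a..b}. norm (h y) \<le> norm (h xh)"
    using continuous_attains_sup[OF compact_Icc _ continuous_on_norm[OF smooth_on_imp_continuous_on[OF less h]]] less
    by auto
  have "norm (bessel_integral a b g mu h w) \<le> norm (h xh) * (C / sqrt w) * (b - a)" if w: "w \<ge> w0" for w
    unfolding bessel_integral_def
  proof (rule integral_bound)
    show "continuous_on {a..b} (\<lambda>x. h x * besselJr mu (w * g x))"
      using w w0 by (intro continuous_on_mult smooth_on_imp_continuous_on[OF less h] continuous_on_besselJr_phase) auto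
    show "norm (h x * besselJr mu (w * g x)) \<le> norm (h xh) * (C / sqrt w)" if "x \<in> {a..b}" for x
      unfolding norm_mult using xh J[OF w that] that by (intro mult_mono) auto
  qed (use less in auto)
  then show ?thesis
    using that[of w0 "norm (h xh) * C * (b - a)"] by (simp add: mult_ac)
qed

lemma bessel_boundary_bound:
  obtains C w0 where "\<And>w. w \<ge> w0 \<Longrightarrow> norm (bessel_boundary a b g mu h w) \<le> C / sqrt w"
proof -
  obtain C w0 where J: "\<And>w x. w \<ge> w0 \<Longrightarrow> x \<in> {a..b} \<Longrightarrow> norm (besselJr mu (w * g x)) \<le> C / sqrt w"
    by (rule besselJr_phase_bound[of mu]) blast
  define K where "K = norm (h b) / \<bar>dI a b g b\<bar> + norm (h a) / \<bar>dI a b g a\<bar>"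
  have "norm (bessel_boundary a b g mu h w) \<le> K * (C / sqrt w)" if w: "w \<ge> w0" for w
  proof -
    have "norm (bessel_boundary a b g mu h w)
        \<le> norm (h b / complex_of_real (dI a b g b) * besselJr mu (w * g b))
          + norm (h a / complex_of_real (dI a b g a) * besselJr mu (w * g a))"
      unfolding bessel_boundary_def by (rule norm_triangle_ineq4)
    also have "\<dots> = norm (h b) / \<bar>dI a b g b\<bar> * norm (besselJr mu (w * g b))
          + norm (h a) / \<bar>dI a b g a\<bar> * norm (besselJr mu (w * g a))"
      by (simp add: norm_mult norm_divide)
    also have "\<dots> \<le> norm (h b) / \<bar>dI a b g b\<bar> * (C / sqrt w) + norm (h a) / \<bar>dI a b g a\<bar> * (C / sqrt w)"
      using J[OF w] less by (intro add_mono mult_left_mono) auto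
    also have "\<dots> = K * (C / sqrt w)"
      unfolding K_def by (simp only: distrib_right)
    finally show ?thesis .
  qed
  then show ?thesis
    using that[of w0 "K * C"] by simp
qed

lemma bessel_integral_sigma_by_parts:
  assumes f: "smooth_on_interval a b f" and w: "w > 0"
  shows "bessel_integral a b g (nu + real N) (sigma a b nu g f N) w
    = (bessel_boundary a b g (nu + real (Suc N)) (sigma a b nu g f N) w
       - bessel_integral a b g (nu + real (Suc N)) (sigma a b nu g f (Suc N)) w) / complex_of_real w"
proof -
  have index: "nu + real N + 1 = nu + real (Suc N)"
    by simp
  show ?thesis
    using bessel_integral_by_parts[OF smooth_on_sigma[OF f] w, of "nu + real N"]
    unfolding sigma_Suc index .
qed

lemma hankelI_remainder:
  assumes f: "smooth_on_interval a b f" and w: "w > 0"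
  shows "hankelI a b nu g f w + (\<Sum>k=1..N. asym_term a b nu g f k w)
    = bessel_integral a b g (nu + real N) (sigma a b nu g f N) w / (- complex_of_real w) ^ N"
proof (induction N)
  case 0
  show ?case
    unfolding hankelI_def bessel_integral_def by simp
next
  case (Suc N)
  define H where "H = bessel_integral a b g (nu + real N) (sigma a b nu g f N) w"
  define H' where "H' = bessel_integral a b g (nu + real (Suc N)) (sigma a b nu g f (Suc N)) w"
  define B where "B = bessel_boundary a b g (nu + real (Suc N)) (sigma a b nu g f N) w"
  have asym: "asym_term a b nu g f (Suc N) w = B / (- complex_of_real w) ^ Suc N"
    unfolding asym_term_def B_def bessel_boundary_def by (simp add: of_real_power)
  have "hankelI a b nu g f w + (\<Sum>k=1..Suc N. asym_term a b nu g f k w)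
      = (hankelI a b nu g f w + (\<Sum>k=1..N. asym_term a b nu g f k w)) + asym_term a b nu g f (Suc N) w"
    by simp
  also have "\<dots> = H / (- complex_of_real w) ^ N + B / (- complex_of_real w) ^ Suc N"
    unfolding Suc.IH asym H_def ..
  also have "\<dots> = H' / (- complex_of_real w) ^ Suc N"
  proof -
    have "B = H' + complex_of_real w * H"
      using bessel_integral_sigma_by_parts[OF f w, of nu N] w
      unfolding H_def[symmetric] H'_def[symmetric] B_def[symmetric] by (simp add: field_simps)
    then show ?thesis
      using w by (simp add: field_simps ring_distribs)
  qed
  finally show ?case
    unfolding H'_def .
qed

theorem hankelI_asymptotic_expansion:
  assumes f: "smooth_on_interval a b f"
  shows "(\<lambda>\<omega>. hankelI a b nu g f \<omega> + (\<Sum>k=1..N. asym_term a b nu g f k \<omega>))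
      \<in> O[at_top](\<lambda>\<omega>. complex_of_real (\<omega> powr (- real N - 3/2)))"
proof -
  define mu where "mu = nu + real (Suc N)"
  obtain C1 w1 where B: "\<And>w. w \<ge> w1 \<Longrightarrow> norm (bessel_boundary a b g mu (sigma a b nu g f N) w) \<le> C1 / sqrt w"
    by (rule bessel_boundary_bound) blast
  obtain C2 w2 where H: "\<And>w. w \<ge> w2 \<Longrightarrow> norm (bessel_integral a b g mu (sigma a b nu g f (Suc N)) w) \<le> C2 / sqrt w"
    by (rule bessel_integral_bound[OF smooth_on_sigma[OF f]]) blast
  have "norm (hankelI a b nu g f w + (\<Sum>k=1..N. asym_term a b nu g f k w))
      \<le> (C1 + C2) * norm (complex_of_real (w powr (- real N - 3/2)))" if w: "w \<ge> max 1 (max w1 w2)" for w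
  proof -
    have "w > 0"
      using w by simp
    then have "norm (hankelI a b nu g f w + (\<Sum>k=1..N. asym_term a b nu g f k w))
        = norm (bessel_boundary a b g mu (sigma a b nu g f N) w - bessel_integral a b g mu (sigma a b nu g f (Suc N)) w)
          / w ^ Suc N"
      unfolding hankelI_remainder[OF f \<open>w > 0\<close>] bessel_integral_sigma_by_parts[OF f \<open>w > 0\<close>, of nu N] mu_def
      by (simp add: norm_divide norm_mult norm_power)
    also have "\<dots> \<le> (C1 / sqrt w + C2 / sqrt w) / w ^ Suc N"
      using B[of w] H[of w] w norm_triangle_ineq4 \<open>w > 0\<close>
      by (intro divide_right_mono) (force intro: order.trans)+
    also have "\<dots> = (C1 + C2) * norm (complex_of_real (w powr (- real N - 3/2)))"
    proof -
      have "w powr (- real N - 3/2) = w powr (- real (Suc N) - 1/2)"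
        by (rule arg_cong[where f = "\<lambda>e. w powr e"]) simp
      also have "\<dots> = 1 / (w ^ Suc N * sqrt w)"
        by (rule powr_minus_nat_minus_half[OF \<open>w > 0\<close>])
      finally have "w powr (- real N - 3/2) = 1 / (w ^ Suc N * sqrt w)" .
      then show ?thesis
        unfolding norm_of_real using \<open>w > 0\<close> by (simp add: add_divide_distrib mult_ac)
    qed
    finally show ?thesis .
  qed
  then show ?thesis
    by (intro bigoI eventually_at_top_linorderI)
qed

end

theorem theorem2p1:
  fixes nu a b :: real and f g :: "real \<Rightarrow> real"
  assumes "a < b"
    and "smooth_on_interval a b f" and "smooth_on_interval a b g"
    and "\<forall>x\<in>{a..b}. g x \<noteq> 0"
    and "\<forall>x\<in>{a..b}. dI a b g x \<noteq> 0"
  shows "\<forall>N::nat.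
    (\<lambda>\<omega>. hankelI a b nu g f \<omega> + (\<Sum>k=1..N. asym_term a b nu g f k \<omega>))
      \<in> O[at_top](\<lambda>\<omega>. complex_of_real (\<omega> powr (- real N - 3/2)))"
proof
  fix N :: nat
  interpret bessel_phase a b g
    using assms(1,3-5) by unfold_locales
  show "(\<lambda>\<omega>. hankelI a b nu g f \<omega> + (\<Sum>k=1..N. asym_term a b nu g f k \<omega>))
      \<in> O[at_top](\<lambda>\<omega>. complex_of_real (\<omega> powr (- real N - 3/2)))"
    by (rule hankelI_asymptotic_expansion[OF assms(2)])
qed

end
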